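(* Every rank-one transformation given by a cutting and stacking construction with a bounded number of cuts ($\sup_n r_n<\infty$) is boundedly rationally ergodic (with $F=I$, the level of $C_0$).
   Context: Rank-one transformation by cutting and stacking: $C_0$ is a single level $I$ of positive finite measure; column $C_n$ is cut into $r_n\ge2$ equal-width subcolumns, spacers are placed above subcolumns, and subcolumns are stacked left to right to form $C_{n+1}$; $T$ maps each level to the one above. For $F$ of positive finite measure, $u_k(F)=\mu(F\cap T^kF)/\mu(F)^2$, $a_n(F)=\sum_{k=0}^{n-1}u_k(F)$, $S_n(f)=\sum_{k=0}^{n-1}f\circ T^k$. $T$ is boundedly rationally ergodic if there is $F$ of positive finite measure with $\mu(X\setminus\bigcup_{i\ge0}T^iF)=0$ and $\sup_{n\ge1}\bigl\|\frac{1}{a_n(F)}S_n(1_F)\bigr\|_\infty<\infty$. *)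

theory Defs
  imports "HOL-Analysis.Analysis"
begin

definition ret_u :: "'a measure \<Rightarrow> ('a \<Rightarrow> 'a) \<Rightarrow> 'a set \<Rightarrow> nat \<Rightarrow> real" where
  "ret_u M T F k = measure M (F \<inter> (T ^^ k) ` F) / (measure M F)\<^sup>2"

definition ret_a :: "'a measure \<Rightarrow> ('a \<Rightarrow> 'a) \<Rightarrow> 'a set \<Rightarrow> nat \<Rightarrow> real" where
  "ret_a M T F n = (\<Sum>k<n. ret_u M T F k)"

definition birk_S :: "('a \<Rightarrow> 'a) \<Rightarrow> nat \<Rightarrow> ('a \<Rightarrow> real) \<Rightarrow> 'a \<Rightarrow> real" where
  "birk_S T n f x = (\<Sum>k<n. f ((T ^^ k) x))"

text \<open>Bounded rational ergodicity witnessed by the set F. The condition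
  sup_n || S_n(1_F) / a_n(F) ||_infty < infty is written out: there is a constant C
  bounding all these functions almost everywhere.\<close>
definition bre_wrt :: "'a measure \<Rightarrow> ('a \<Rightarrow> 'a) \<Rightarrow> 'a set \<Rightarrow> bool" where
  "bre_wrt M T F \<longleftrightarrow>
     F \<in> sets M \<and> 0 < emeasure M F \<and> emeasure M F < \<infinity> \<and>
     emeasure M (space M - (\<Union>i. (T ^^ i) ` F)) = 0 \<and>
     (\<exists>C::real. \<forall>n\<ge>1. AE x in M. \<bar>birk_S T n (indicator F) x / ret_a M T F n\<bar> \<le> C)"

text \<open>Parameters: w0 > 0 width of the initial level I = [0, w0); r n number of cuts of
  column C_n; s n j number of spacers placed above subcolumn j (j < r n) of C_n.
  Levels are half-open intervals; spacers of stage n are fresh intervals placed to the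
  right of everything used so far.\<close>

definition rk1_wid :: "real \<Rightarrow> (nat \<Rightarrow> nat) \<Rightarrow> nat \<Rightarrow> real" where
  "rk1_wid w0 r n = w0 / (\<Prod>i<n. real (r i))"

text \<open>Right end of the region [0, end n) occupied by column C_n.\<close>
fun rk1_end :: "real \<Rightarrow> (nat \<Rightarrow> nat) \<Rightarrow> (nat \<Rightarrow> nat \<Rightarrow> nat) \<Rightarrow> nat \<Rightarrow> real" where
  "rk1_end w0 r s 0 = w0"
| "rk1_end w0 r s (Suc n) = rk1_end w0 r s n + real (\<Sum>j<r n. s n j) * rk1_wid w0 r (Suc n)"

text \<open>Left endpoints of the levels of column C_n, listed bottom to top.\<close>
fun rk1_col :: "real \<Rightarrow> (nat \<Rightarrow> nat) \<Rightarrow> (nat \<Rightarrow> nat \<Rightarrow> nat) \<Rightarrow> nat \<Rightarrow> real list" where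
  "rk1_col w0 r s 0 = [0]"
| "rk1_col w0 r s (Suc n) =
     concat (map (\<lambda>j. map (\<lambda>a. a + real j * rk1_wid w0 r (Suc n)) (rk1_col w0 r s n)
                      @ map (\<lambda>k. rk1_end w0 r s n + real ((\<Sum>l<j. s n l) + k) * rk1_wid w0 r (Suc n))
                            [0..<s n j])
                 [0..<r n])"

definition rk1_level :: "real \<Rightarrow> (nat \<Rightarrow> nat) \<Rightarrow> (nat \<Rightarrow> nat \<Rightarrow> nat) \<Rightarrow> nat \<Rightarrow> nat \<Rightarrow> real set" where
  "rk1_level w0 r s n i = {rk1_col w0 r s n ! i ..< rk1_col w0 r s n ! i + rk1_wid w0 r n}"

definition rk1_space :: "real \<Rightarrow> (nat \<Rightarrow> nat) \<Rightarrow> (nat \<Rightarrow> nat \<Rightarrow> nat) \<Rightarrow> real set" where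
  "rk1_space w0 r s = (\<Union>n. \<Union>i\<in>{..<length (rk1_col w0 r s n)}. rk1_level w0 r s n i)"

text \<open>T maps each non-top level of each column by translation onto the level above
  (consistent across stages); on the remaining (null) set it is the identity.\<close>
definition rk1_T :: "real \<Rightarrow> (nat \<Rightarrow> nat) \<Rightarrow> (nat \<Rightarrow> nat \<Rightarrow> nat) \<Rightarrow> real \<Rightarrow> real" where
  "rk1_T w0 r s x =
    (if \<exists>n i. Suc i < length (rk1_col w0 r s n) \<and> x \<in> rk1_level w0 r s n i
     then (let p = (SOME p. Suc (snd p) < length (rk1_col w0 r s (fst p)) \<and> x \<in> rk1_level w0 r s (fst p) (snd p))
           in x - rk1_col w0 r s (fst p) ! snd p + rk1_col w0 r s (fst p) ! Suc (snd p))
     else x)"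

definition rk1_measure :: "real \<Rightarrow> (nat \<Rightarrow> nat) \<Rightarrow> (nat \<Rightarrow> nat \<Rightarrow> nat) \<Rightarrow> real measure" where
  "rk1_measure w0 r s = restrict_space lborel (rk1_space w0 r s)"

end

theory Submission
  imports Defs
begin

text \<open>Measure everything in units of the width w_N of the levels of C_N. The base I consists of
  P_N = r_0 \<dots> r_(N-1) levels of C_N, and counting ordered pairs of them gives
  \<Sum>_(k < h_N) \<mu>(I \<inter> T^k I) \<ge> P_N^2 w_N / 2, so a_m(I) \<ge> P_N / (2 \<mu>(I)) once m \<ge> h_N, the height
  of C_N. Conversely, take N with h_N \<le> m < h_(N+1). Almost every orbit segment of length m lies
  in a single column C_K, where it meets at most two of the copies of C_(N+1) that C_K is made of,
  hence visits I at most 2 P_(N+1) \<le> 2 B P_N times. So S_m(1_I)/a_m(I) \<le> 4 B \<mu>(I) almost everywhere.\<close>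

lemma length_concat_map_upt: "length (concat (map f [0..<R])) = (\<Sum>l<R. length (f l))"
  by (simp add: length_concat sum_list_sum_nth atLeast0LessThan)

lemma nth_concat_map_upt:
  assumes "j < R" "i < length (f j)"
  shows "concat (map f [0..<R]) ! ((\<Sum>l<j. length (f l)) + i) = f j ! i"
  using assms
proof (induction R)
  case (Suc R)
  show ?case
  proof (cases "j < R")
    case True
    have "(\<Sum>l<j. length (f l)) + i < (\<Sum>l<Suc j. length (f l))" using Suc.prems by simp
    also have "\<dots> \<le> (\<Sum>l<R. length (f l))" using True by (intro sum_mono2) auto
    finally show ?thesis using Suc True by (simp add: nth_append length_concat_map_upt)
  next
    case False
    then have "j = R" using Suc.prems by simp
    then show ?thesis using Suc.prems by (simp add: nth_append length_concat_map_upt)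
  qed
qed simp

lemma concat_map_upt_index:
  assumes "p < length (concat (map f [0..<R]))"
  shows "\<exists>j<R. \<exists>i<length (f j). p = (\<Sum>l<j. length (f l)) + i"
  using assms
proof (induction R)
  case (Suc R)
  show ?case
  proof (cases "p < (\<Sum>l<R. length (f l))")
    case True
    then show ?thesis using Suc.IH less_SucI by (metis length_concat_map_upt)
  next
    case False
    have "p < (\<Sum>l<Suc R. length (f l))" using Suc.prems by (simp only: length_concat_map_upt)
    then show ?thesis using False
      by (intro exI[of _ R]) (auto intro!: exI[of _ "p - (\<Sum>l<R. length (f l))"])
  qed
qed simp

section \<open>Integer model of the columns\<close>

text \<open>In units of the level width of C_n, level i of C_n is [int_col n ! i, int_col n ! i + 1)
  and C_n lies in [0, int_end n); cutting into r_n subcolumns multiplies all coordinates by r_n.\<close>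

fun int_end :: "(nat \<Rightarrow> nat) \<Rightarrow> (nat \<Rightarrow> nat \<Rightarrow> nat) \<Rightarrow> nat \<Rightarrow> nat" where
  "int_end r s 0 = 1"
| "int_end r s (Suc n) = int_end r s n * r n + (\<Sum>j<r n. s n j)"

fun int_col :: "(nat \<Rightarrow> nat) \<Rightarrow> (nat \<Rightarrow> nat \<Rightarrow> nat) \<Rightarrow> nat \<Rightarrow> nat list" where
  "int_col r s 0 = [0]"
| "int_col r s (Suc n) = concat (map (\<lambda>j. map (\<lambda>a. a * r n + j) (int_col r s n)
      @ map (\<lambda>k. int_end r s n * r n + (\<Sum>l<j. s n l) + k) [0..<s n j]) [0..<r n])"

declare int_end.simps(2) [simp del] int_col.simps(2) [simp del]

locale rank_one_construction =
  fixes w0 :: real and r :: "nat \<Rightarrow> nat" and s :: "nat \<Rightarrow> nat \<Rightarrow> nat"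
  assumes w0_pos: "0 < w0" and r_ge_2: "\<And>n. 2 \<le> r n"
begin

abbreviation c where "c n \<equiv> int_col r s n"
abbreviation e where "e n \<equiv> int_end r s n"

definition w where "w n = rk1_wid w0 r n"
definition P :: "nat \<Rightarrow> nat" where "P n = (\<Prod>i<n. r i)"
definition h where "h n = length (c n)"
definition L where "L n i = {real (c n ! i) * w n ..< (real (c n ! i) + 1) * w n}"

text \<open>The j-th subcolumn of C_n with its spacers occupies the indices
  pos n j, \<dots>, pos n (Suc j) - 1 of C_(n+1).\<close>
definition pos where "pos n j = j * h n + (\<Sum>l<j. s n l)"
definition subcol where
  "subcol n j = map (\<lambda>a. a * r n + j) (c n) @ map (\<lambda>k. e n * r n + (\<Sum>l<j. s n l) + k) [0..<s n j]"

lemma r_pos: "0 < r n"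
  using r_ge_2[of n] by simp

lemma P_pos: "0 < P n"
  unfolding P_def using r_pos by (simp add: prod_pos)

lemma P_Suc: "P (Suc n) = P n * r n"
  unfolding P_def by simp

lemma w_0: "w 0 = w0"
  unfolding w_def rk1_wid_def by simp

lemma w_pos: "0 < w n"
  unfolding w_def rk1_wid_def using w0_pos r_pos by (simp add: prod_pos)

lemma w_Suc: "w n = real (r n) * w (Suc n)"
  unfolding w_def rk1_wid_def using r_pos[of n] by (simp add: prod_pos)

lemma P_mult_w: "real (P n) * w n = w0"
  unfolding P_def w_def rk1_wid_def using r_pos by (simp add: prod_pos)

lemma w_le_power: "w n \<le> w0 / 2 ^ n"
proof (induction n)
  case (Suc n)
  have "2 * w (Suc n) \<le> w n"
    using r_ge_2[of n] w_pos[of "Suc n"] w_Suc[of n] by (simp add: mult_right_mono)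
  then have "w (Suc n) * 2 ^ Suc n \<le> w n * 2 ^ n" by simp
  also have "\<dots> \<le> w0" using Suc by (simp add: field_simps)
  finally show ?case by (simp add: field_simps)
qed (simp add: w_0)

lemma w_eventually_less: "0 < \<epsilon> \<Longrightarrow> \<exists>d. w (K + d) < \<epsilon>"
proof -
  assume eps: "0 < \<epsilon>"
  obtain d where d: "w0 / \<epsilon> < 2 ^ d" using real_arch_pow[of 2 "w0 / \<epsilon>"] by auto
  have "w (K + d) \<le> w0 / 2 ^ (K + d)" by (rule w_le_power)
  also have "\<dots> \<le> w0 / 2 ^ d" using w0_pos by (intro divide_left_mono) (auto simp: power_add)
  also have "\<dots> < \<epsilon>" using d eps w0_pos by (simp add: field_simps)
  finally show ?thesis by blast
qed

lemma c_Suc: "c (Suc n) = concat (map (subcol n) [0..<r n])"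
  unfolding subcol_def[abs_def] int_col.simps by (simp add: add.assoc)

lemma length_subcol: "length (subcol n j) = h n + s n j"
  by (simp add: h_def subcol_def)

lemma sum_length_subcol: "(\<Sum>l<j. length (subcol n l)) = pos n j"
  unfolding length_subcol pos_def by (simp add: sum.distrib)

lemma h_0: "h 0 = 1"
  by (simp add: h_def)

lemma pos_Suc: "pos n (Suc j) = pos n j + h n + s n j"
  by (simp add: pos_def)

lemma h_Suc: "h (Suc n) = pos n (r n)"
  unfolding h_def c_Suc length_concat_map_upt sum_length_subcol ..

lemma h_ge_power: "2 ^ n \<le> h n"
proof (induction n)
  case (Suc n)
  have "2 * h n \<le> r n * h n" using r_ge_2[of n] by (intro mult_right_mono) auto
  then show ?case using Suc unfolding h_Suc pos_def power_Suc by linarith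
qed (simp add: h_0)

lemma less_h: "n < h n"
  using less_exp[of n] h_ge_power[of n] by linarith

lemma pos_add_h_le: "j < j' \<Longrightarrow> pos n j + h n \<le> pos n j'"
proof (induction j')
  case (Suc j')
  then show ?case by (cases "j = j'") (auto simp: pos_Suc)
qed simp

lemma pos_add_h_le_h_Suc: "j < r n \<Longrightarrow> pos n j + h n \<le> h (Suc n)"
  using pos_add_h_le[of j "r n" n] pos_add_h_le[of j "Suc j" n]
  by (cases "Suc j = r n") (auto simp: h_Suc)

lemma c_Suc_nth: "j < r n \<Longrightarrow> i < h n + s n j \<Longrightarrow> c (Suc n) ! (pos n j + i) = subcol n j ! i"
  unfolding c_Suc using nth_concat_map_upt[of j "r n" i "subcol n"]
  unfolding sum_length_subcol unfolding length_subcol by simp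

lemma c_Suc_nth_copy: "j < r n \<Longrightarrow> i < h n \<Longrightarrow> c (Suc n) ! (pos n j + i) = c n ! i * r n + j"
  using c_Suc_nth[of j n i] by (simp add: subcol_def nth_append h_def)

lemma c_Suc_nth_spacer: "j < r n \<Longrightarrow> k < s n j \<Longrightarrow>
    c (Suc n) ! (pos n j + h n + k) = e n * r n + (\<Sum>l<j. s n l) + k"
  using c_Suc_nth[of j n "h n + k"] by (simp add: subcol_def nth_append h_def add.assoc)

lemma index_Suc_cases:
  assumes "p < h (Suc n)"
  shows "(\<exists>j<r n. \<exists>i<h n. p = pos n j + i) \<or> (\<exists>j<r n. \<exists>k<s n j. p = pos n j + h n + k)"
proof -
  from assms have "p < length (concat (map (subcol n) [0..<r n]))"
    unfolding h_def c_Suc .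
  from concat_map_upt_index[OF this] obtain j i where
    ji: "j < r n" "i < h n + s n j" "p = pos n j + i"
    unfolding sum_length_subcol unfolding length_subcol by blast
  show ?thesis
  proof (cases "i < h n")
    case False
    then have "p = pos n j + h n + (i - h n)" "i - h n < s n j" using ji by simp_all
    then show ?thesis using ji(1) by blast
  qed (use ji in blast)
qed

lemma sum_s_less: "j < j' \<Longrightarrow> k < s n j \<Longrightarrow> (\<Sum>l<j. s n l) + k < (\<Sum>l<j'. s n l)"
proof -
  assume a: "j < j'" "k < s n j"
  have "(\<Sum>l<j. s n l) + k < (\<Sum>l<Suc j. s n l)" using a by simp
  also have "\<dots> \<le> (\<Sum>l<j'. s n l)" using a by (intro sum_mono2) auto
  finally show ?thesis .
qed

lemma copy_less_spacer: "c n ! i < e n \<Longrightarrow> j < r n \<Longrightarrow> c n ! i * r n + j < e n * r n"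
proof -
  assume "c n ! i < e n" "j < r n"
  then have "(c n ! i + 1) * r n \<le> e n * r n" by (intro mult_right_mono) auto
  with \<open>j < r n\<close> show ?thesis by (simp add: algebra_simps)
qed

lemma c_less_e: "i < h n \<Longrightarrow> c n ! i < e n"
proof (induction n arbitrary: i)
  case (Suc n)
  from index_Suc_cases[OF Suc.prems] show ?case
  proof (elim disjE exE conjE)
    fix j i' assume "j < r n" "i' < h n" "i = pos n j + i'"
    then show ?thesis using Suc.IH copy_less_spacer c_Suc_nth_copy by (simp add: int_end.simps(2) trans_less_add1)
  next
    fix j k assume "j < r n" "k < s n j" "i = pos n j + h n + k"
    then show ?thesis using c_Suc_nth_spacer sum_s_less[of j "r n" k n] by (simp add: int_end.simps(2))
  qed
qed (simp add: h_def)

lemma P_le_e: "P n \<le> e n"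
proof (induction n)
  case (Suc n)
  have "P n * r n \<le> e n * r n" using Suc by (rule mult_right_mono) simp
  then show ?case unfolding P_Suc int_end.simps by linarith
qed (simp add: P_def)

lemma c_inj: "i < h n \<Longrightarrow> i' < h n \<Longrightarrow> c n ! i = c n ! i' \<Longrightarrow> i = i'"
proof (induction n arbitrary: i i')
  case (Suc n)
  from index_Suc_cases[OF Suc.prems(1)] index_Suc_cases[OF Suc.prems(2)] show ?case
  proof (elim disjE exE conjE)
    fix j a j' a' assume h: "j < r n" "a < h n" "i = pos n j + a" "j' < r n" "a' < h n" "i' = pos n j' + a'"
    then have eq: "c n ! a * r n + j = c n ! a' * r n + j'" using Suc.prems c_Suc_nth_copy by simp
    then have "(c n ! a * r n + j) mod r n = (c n ! a' * r n + j') mod r n" by simp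
    then have "j = j'" using h by simp
    then have "c n ! a = c n ! a'" using eq r_pos[of n] by simp
    then show ?thesis using Suc.IH h \<open>j = j'\<close> by blast
  next
    fix j a j' k assume h: "j < r n" "a < h n" "i = pos n j + a" "j' < r n" "k < s n j'" "i' = pos n j' + h n + k"
    then show ?thesis
      using Suc.prems c_Suc_nth_copy c_Suc_nth_spacer copy_less_spacer[OF c_less_e] by fastforce
  next
    fix j k j' a assume h: "j < r n" "k < s n j" "i = pos n j + h n + k" "j' < r n" "a < h n" "i' = pos n j' + a"
    then show ?thesis
      using Suc.prems c_Suc_nth_copy c_Suc_nth_spacer copy_less_spacer[OF c_less_e] by fastforce
  next
    fix j k j' k' assume h: "j < r n" "k < s n j" "i = pos n j + h n + k" "j' < r n" "k' < s n j'" "i' = pos n j' + h n + k'"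
    have eq: "(\<Sum>l<j. s n l) + k = (\<Sum>l<j'. s n l) + k'"
      using h c_Suc_nth_spacer Suc.prems by simp
    have "j = j'"
      using eq sum_s_less[of j j' k n] sum_s_less[of j' j k' n] h by (metis less_add_same_cancel1 less_asym' linorder_neqE_nat not_add_less1)
    then show ?thesis using eq h by simp
  qed
qed (simp add: h_def)

lemma c_0: "c n ! 0 = 0"
proof (induction n)
  case (Suc n)
  have "0 < h n" using h_ge_power[of n] by (metis le_zero_eq neq0_conv power_not_zero zero_neq_numeral)
  then show ?case using c_Suc_nth_copy[OF r_pos, of 0 n] Suc by (simp add: pos_def)
qed simp

lemma c_surj: "a < P n \<Longrightarrow> \<exists>t<h n. c n ! t = a"
proof (induction n arbitrary: a)
  case (Suc n)
  have "a div r n < P n" using Suc.prems r_pos unfolding P_Suc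
    by (simp add: div_less_iff_less_mult)
  then obtain t where t: "t < h n" "c n ! t = a div r n" using Suc.IH by blast
  have jm: "a mod r n < r n" using r_pos by simp
  have "c (Suc n) ! (pos n (a mod r n) + t) = a" using c_Suc_nth_copy[OF jm t(1)] t(2) by simp
  moreover have "pos n (a mod r n) + t < h (Suc n)" using pos_add_h_le_h_Suc[OF jm] t(1) by simp
  ultimately show ?case by blast
qed (simp add: P_def h_def)

lemma L_disjoint: "i < h n \<Longrightarrow> i' < h n \<Longrightarrow> x \<in> L n i \<Longrightarrow> x \<in> L n i' \<Longrightarrow> i = i'"
proof -
  assume a: "i < h n" "i' < h n" "x \<in> L n i" "x \<in> L n i'"
  have "c n ! i = c n ! i'"
  proof (rule ccontr)
    assume ne: "c n ! i \<noteq> c n ! i'"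
    have False if "p < q" "x \<in> {real p * w n ..< (real p + 1) * w n}"
      "x \<in> {real q * w n ..< (real q + 1) * w n}" for p q :: nat
    proof -
      have "(real p + 1) * w n \<le> real q * w n"
        using that(1) w_pos[of n] by (intro mult_right_mono) auto
      with that(2,3) show False by simp
    qed
    then show False using ne a unfolding L_def by (metis linorder_neqE_nat)
  qed
  then show ?thesis using c_inj a by blast
qed

lemma L_Suc_subset: "j < r n \<Longrightarrow> i < h n \<Longrightarrow> L (Suc n) (pos n j + i) \<subseteq> L n i"
proof -
  assume a: "j < r n" "i < h n"
  let ?a = "c n ! i" and ?v = "w (Suc n)"
  have v: "0 < ?v" by (rule w_pos)
  have wn: "w n = real (r n) * ?v" by (rule w_Suc)
  have "real ?a * w n \<le> real (?a * r n + j) * ?v"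
    unfolding wn using v by (simp add: algebra_simps)
  moreover have "(real (?a * r n + j) + 1) * ?v \<le> (real ?a + 1) * w n"
  proof -
    have "(real j + 1) * ?v \<le> real (r n) * ?v" using a v by (intro mult_right_mono) auto
    then show ?thesis unfolding wn by (simp add: algebra_simps)
  qed
  ultimately show ?thesis unfolding L_def using c_Suc_nth_copy[OF a] by auto
qed

lemma L_Suc_cover:
  assumes "i < h n" "x \<in> L n i"
  shows "\<exists>j<r n. x \<in> L (Suc n) (pos n j + i)"
proof -
  let ?a = "c n ! i" and ?v = "w (Suc n)"
  have v: "0 < ?v" by (rule w_pos)
  have wn: "w n = real (r n) * ?v" by (rule w_Suc)
  define f where "f = floor (x / ?v)"
  have x1: "real ?a * w n \<le> x" "x < (real ?a + 1) * w n" using assms(2) unfolding L_def by auto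
  have "real ?a * real (r n) \<le> x / ?v" using x1(1) v unfolding wn by (simp add: field_simps)
  then have f1: "int (?a * r n) \<le> f" unfolding f_def by (simp add: le_floor_iff)
  have "x / ?v < real ((?a + 1) * r n)" using x1(2) v unfolding wn by (simp add: field_simps)
  then have f2: "f < int ((?a + 1) * r n)" unfolding f_def by (simp add: floor_less_iff)
  define j where "j = nat (f - int (?a * r n))"
  have j: "j < r n" using f1 f2 unfolding j_def by (simp add: algebra_simps)
  have fj: "f = int (?a * r n + j)" using f1 unfolding j_def by simp
  have "real (?a * r n + j) * ?v \<le> x"
    using of_int_floor_le[of "x / ?v"] v unfolding f_def[symmetric] fj by (simp add: field_simps)
  moreover have "x < (real (?a * r n + j) + 1) * ?v"
    using real_of_int_floor_add_one_gt[of "x / ?v"] v unfolding f_def[symmetric] fj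
    by (simp add: field_simps)
  ultimately have "x \<in> L (Suc n) (pos n j + i)" unfolding L_def using c_Suc_nth_copy[OF j assms(1)] by simp
  then show ?thesis using j by blast
qed

lemma L_shift: "x \<in> L n i \<Longrightarrow> x + (real (c n ! i') - real (c n ! i)) * w n \<in> L n i'"
  unfolding L_def by (auto simp: algebra_simps)

text \<open>The indices in C_(n+d) of the bottoms of the copies of C_n that C_(n+d) is stacked from.\<close>
fun copies :: "nat \<Rightarrow> nat \<Rightarrow> nat set" where
  "copies n 0 = {0}"
| "copies n (Suc d) = (\<lambda>(j, q). pos (n + d) j + q) ` ({..<r (n + d)} \<times> copies n d)"

lemma copy_add_h_le: "q \<in> copies n d \<Longrightarrow> q + h n \<le> h (n + d)"
proof (induction d arbitrary: q)
  case (Suc d)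
  then obtain j q0 where jq: "j < r (n + d)" "q0 \<in> copies n d" "q = pos (n + d) j + q0" by auto
  have "q0 + h n \<le> h (n + d)" using Suc.IH[OF jq(2)] .
  then show ?case using pos_add_h_le_h_Suc[OF jq(1)] jq(3) by simp
qed simp

lemma L_copy_subset: "q \<in> copies n d \<Longrightarrow> t < h n \<Longrightarrow> L (n + d) (q + t) \<subseteq> L n t"
proof (induction d arbitrary: q)
  case (Suc d)
  then obtain j q0 where jq: "j < r (n + d)" "q0 \<in> copies n d" "q = pos (n + d) j + q0" by auto
  have "q0 + t < h (n + d)" using copy_add_h_le[OF jq(2)] Suc.prems(2) by simp
  then have "L (Suc (n + d)) (pos (n + d) j + (q0 + t)) \<subseteq> L (n + d) (q0 + t)"
    using L_Suc_subset[OF jq(1)] by blast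
  then show ?case using Suc.IH[OF jq(2) Suc.prems(2)] jq(3) by (simp add: add.assoc)
qed simp

lemma copies_separated: "q \<in> copies n d \<Longrightarrow> q' \<in> copies n d \<Longrightarrow> q < q' \<Longrightarrow> q + h n \<le> q'"
proof (induction d arbitrary: q q')
  case (Suc d)
  from Suc.prems obtain j q0 where jq: "j < r (n + d)" "q0 \<in> copies n d" "q = pos (n + d) j + q0" by auto
  from Suc.prems obtain j' q0' where jq': "j' < r (n + d)" "q0' \<in> copies n d" "q' = pos (n + d) j' + q0'" by auto
  have b0: "q0 + h n \<le> h (n + d)" "q0' + h n \<le> h (n + d)" using copy_add_h_le jq(2) jq'(2) by auto
  consider "j = j'" | "j < j'" | "j' < j" by linarith
  then show ?case
  proof cases
    case 1 then show ?thesis using Suc.IH[OF jq(2) jq'(2)] Suc.prems jq jq' by simp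
  next
    case 2 then show ?thesis using pos_add_h_le[OF 2, of "n + d"] b0 jq jq' by simp
  next
    case 3 then show ?thesis using pos_add_h_le[OF 3, of "n + d"] b0 jq jq' Suc.prems by simp
  qed
qed simp

lemma copies_cover:
  assumes "x \<in> L n t" "t < h n"
  shows "\<exists>q\<in>copies n d. x \<in> L (n + d) (q + t)"
proof (induction d)
  case (Suc d)
  then obtain q where q: "q \<in> copies n d" "x \<in> L (n + d) (q + t)" by blast
  have "q + t < h (n + d)" using copy_add_h_le[OF q(1)] assms(2) by simp
  from L_Suc_cover[OF this q(2)] obtain j where
    "j < r (n + d)" "x \<in> L (Suc (n + d)) (pos (n + d) j + (q + t))" by blast
  with q(1) show ?case by (intro bexI[of _ "pos (n + d) j + q"]) (auto simp: add.assoc)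
qed (use assms in simp)

lemma L_deeper:
  assumes "x \<in> L n t" "t < h n" "n \<le> K"
  shows "\<exists>i<h K. x \<in> L K i"
proof -
  obtain q where "q \<in> copies n (K - n)" "x \<in> L K (q + t)"
    using copies_cover[OF assms(1,2), of "K - n"] assms(3) by auto
  moreover have "q + t < h K" using copy_add_h_le[OF \<open>q \<in> _\<close>] assms(2,3) by simp
  ultimately show ?thesis by blast
qed

section \<open>The concrete construction and its transformation\<close>

lemma rk1_end_eq: "rk1_end w0 r s n = real (e n) * w n"
proof (induction n)
  case (Suc n)
  have "rk1_wid w0 r (Suc n) = w (Suc n)" by (simp add: w_def)
  then show ?case using Suc w_Suc[of n] by (simp add: algebra_simps int_end.simps(2))
qed (simp add: w_0)

lemma rk1_col_eq: "rk1_col w0 r s n = map (\<lambda>x. real x * w n) (c n)"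
proof (induction n)
  case (Suc n)
  have subcol_real:
    "map (\<lambda>a. a + real j * w (Suc n)) (map (\<lambda>x. real x * w n) (c n)) @
     map (\<lambda>k. rk1_end w0 r s n + real (sum (s n) {..<j} + k) * w (Suc n)) [0..<s n j]
     = map (\<lambda>x. real x * w (Suc n)) (subcol n j)" for j
  proof -
    have "map (\<lambda>a. a + real j * w (Suc n)) (map (\<lambda>x. real x * w n) (c n))
        = map (\<lambda>a. real (a * r n + j) * w (Suc n)) (c n)"
      unfolding map_map o_def w_Suc[of n] by (intro map_cong refl) (simp add: algebra_simps)
    moreover have "map (\<lambda>k. rk1_end w0 r s n + real (sum (s n) {..<j} + k) * w (Suc n)) [0..<s n j]
        = map (\<lambda>k. real (e n * r n + (\<Sum>l<j. s n l) + k) * w (Suc n)) [0..<s n j]"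
      unfolding rk1_end_eq w_Suc[of n] by (intro map_cong refl) (simp add: algebra_simps)
    ultimately show ?thesis unfolding subcol_def by simp
  qed
  have ww: "rk1_wid w0 r (Suc n) = w (Suc n)" by (simp add: w_def)
  show ?case
    unfolding rk1_col.simps Suc ww unfolding subcol_real unfolding c_Suc map_concat map_map comp_def ..
qed simp

lemma length_rk1_col: "length (rk1_col w0 r s n) = h n"
  by (simp add: rk1_col_eq h_def)

lemma rk1_col_nth: "i < h n \<Longrightarrow> rk1_col w0 r s n ! i = real (c n ! i) * w n"
  by (simp add: rk1_col_eq h_def)

lemma rk1_level_eq: "i < h n \<Longrightarrow> rk1_level w0 r s n i = L n i"
  unfolding rk1_level_def L_def by (simp add: rk1_col_nth w_def algebra_simps)

lemma rk1_space_eq: "rk1_space w0 r s = (\<Union>n. \<Union>i<h n. L n i)"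
  unfolding rk1_space_def length_rk1_col using rk1_level_eq by auto

abbreviation T where "T \<equiv> rk1_T w0 r s"

definition jump where "jump n i = (real (c n ! Suc i) - real (c n ! i)) * w n"

lemma jump_Suc: "Suc i < h n \<Longrightarrow> j < r n \<Longrightarrow> jump (Suc n) (pos n j + i) = jump n i"
  using c_Suc_nth_copy[of j n "Suc i"] c_Suc_nth_copy[of j n i]
  unfolding jump_def w_Suc[of n] by (simp add: algebra_simps)

lemma jump_copy:
  assumes "q \<in> copies n d" "Suc t < h n"
  shows "jump (n + d) (q + t) = jump n t"
  using assms(1)
proof (induction d arbitrary: q)
  case (Suc d)
  then obtain j q0 where jq: "j < r (n + d)" "q0 \<in> copies n d" "q = pos (n + d) j + q0" by auto
  have "Suc (q0 + t) < h (n + d)" using copy_add_h_le[OF jq(2)] assms(2) by simp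
  then have "jump (Suc (n + d)) (pos (n + d) j + (q0 + t)) = jump (n + d) (q0 + t)"
    using jump_Suc jq(1) by blast
  then show ?case using Suc.IH[OF jq(2)] jq(3) by (simp add: add.assoc)
qed simp

text \<open>rk1_T reads the jump off an arbitrarily chosen stage; the choice does not matter.\<close>
lemma jump_consistent:
  assumes "x \<in> L n i" "Suc i < h n" "x \<in> L n' i'" "Suc i' < h n'"
  shows "jump n i = jump n' i'"
proof -
  have "jump n i = jump n' i'" if a: "x \<in> L n i" "Suc i < h n" "x \<in> L n' i'" "Suc i' < h n'" "n \<le> n'"
    for n i n' i'
  proof -
    obtain q where q: "q \<in> copies n (n' - n)" "x \<in> L n' (q + i)"
      using copies_cover[OF a(1), of "n' - n"] a(2,5) by auto
    have "q + i < h n'" using copy_add_h_le[OF q(1)] a(2,5) by simp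
    then have "q + i = i'" using L_disjoint q(2) a(3,4) by simp
    then show ?thesis using jump_copy[OF q(1) a(2)] a(5) by simp
  qed
  then show ?thesis using assms by (metis nle_le)
qed

lemma T_step:
  assumes "x \<in> L n i" "Suc i < h n"
  shows "T x = x + jump n i"
proof -
  let ?Q = "\<lambda>p. Suc (snd p) < length (rk1_col w0 r s (fst p)) \<and> x \<in> rk1_level w0 r s (fst p) (snd p)"
  have ex: "\<exists>n i. Suc i < length (rk1_col w0 r s n) \<and> x \<in> rk1_level w0 r s n i"
    using assms rk1_level_eq[of i n] length_rk1_col[of n] by (intro exI[of _ n] exI[of _ i]) simp
  then have "\<exists>p. ?Q p" by auto
  then have Qp: "?Q (SOME p. ?Q p)" by (rule someI_ex)
  define p where "p = (SOME p. ?Q p)"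
  have p1: "Suc (snd p) < h (fst p)" and p2: "x \<in> L (fst p) (snd p)"
    using Qp rk1_level_eq[of "snd p" "fst p"] length_rk1_col[of "fst p"] unfolding p_def[symmetric] by auto
  have "T x = x - rk1_col w0 r s (fst p) ! snd p + rk1_col w0 r s (fst p) ! Suc (snd p)"
    unfolding rk1_T_def using ex by (simp add: Let_def p_def)
  also have "\<dots> = x + jump (fst p) (snd p)"
    unfolding jump_def using p1 rk1_col_nth[of "snd p" "fst p"] rk1_col_nth[of "Suc (snd p)" "fst p"]
    by (simp add: algebra_simps)
  also have "jump (fst p) (snd p) = jump n i" using jump_consistent[OF p2 p1 assms] .
  finally show ?thesis .
qed

lemma T_iterate:
  assumes "x \<in> L n i" "i + j < h n"
  shows "(T ^^ j) x = x + (real (c n ! (i + j)) - real (c n ! i)) * w n"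
  using assms(2)
proof (induction j)
  case (Suc j)
  have IH: "(T ^^ j) x = x + (real (c n ! (i + j)) - real (c n ! i)) * w n" using Suc by simp
  have "(T ^^ j) x \<in> L n (i + j)" unfolding IH by (rule L_shift[OF assms(1)])
  then have "(T ^^ Suc j) x = (T ^^ j) x + jump n (i + j)"
    using T_step Suc.prems by simp
  then show ?case unfolding IH jump_def by (simp add: algebra_simps)
qed simp

lemma T_iterate_in_L:
  assumes "x \<in> L n i" "i + j < h n"
  shows "(T ^^ j) x \<in> L n (i + j)"
  unfolding T_iterate[OF assms] by (rule L_shift[OF assms(1)])

definition F where "F = L 0 0"

lemma F_eq: "F = {0..<w0}"
  unfolding F_def L_def by (simp add: w_0)

lemma rk1_level_0_0: "rk1_level w0 r s 0 0 = F"
  unfolding F_def using rk1_level_eq[of 0 0] h_0 by simp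

lemma L_subset_F: "c n ! p < P n \<Longrightarrow> L n p \<subseteq> F"
proof -
  assume "c n ! p < P n"
  then have "(real (c n ! p) + 1) * w n \<le> real (P n) * w n"
    using w_pos[of n] by (intro mult_right_mono) auto
  then show ?thesis unfolding F_eq L_def P_mult_w using w_pos[of n] by auto
qed

lemma L_disjoint_F: "\<not> c n ! p < P n \<Longrightarrow> L n p \<inter> F = {}"
proof -
  assume "\<not> c n ! p < P n"
  then have "real (P n) * w n \<le> real (c n ! p) * w n"
    using w_pos[of n] by (intro mult_right_mono) auto
  then show ?thesis unfolding F_eq L_def P_mult_w by auto
qed

lemma indicator_F_L: "y \<in> L n p \<Longrightarrow> indicator F y = (if c n ! p < P n then 1 else (0::real))"
  using L_subset_F[of n p] L_disjoint_F[of n p] by (auto simp: indicator_def)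

lemma F_in_level: "x \<in> F \<Longrightarrow> \<exists>i<h n. x \<in> L n i"
  using L_deeper[of x 0 0 n] h_0 unfolding F_def by simp

text \<open>The indices of the levels of C_n contained in I (see L_subset_F and L_disjoint_F).\<close>
definition base_levels where "base_levels n = {t. t < h n \<and> c n ! t < P n}"

lemma finite_base_levels: "finite (base_levels n)"
  unfolding base_levels_def by simp

lemma card_base_levels: "card (base_levels n) = P n"
proof -
  have "inj_on (\<lambda>t. c n ! t) (base_levels n)"
    using c_inj unfolding inj_on_def base_levels_def by blast
  moreover have "(\<lambda>t. c n ! t) ` base_levels n = {..<P n}"
  proof
    show "{..<P n} \<subseteq> (\<lambda>t. c n ! t) ` base_levels n"
    proof
      fix a assume "a \<in> {..<P n}"
      with c_surj obtain t where "t < h n" "c n ! t = a" by blast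
      with \<open>a \<in> {..<P n}\<close> show "a \<in> (\<lambda>t. c n ! t) ` base_levels n"
        unfolding base_levels_def by (intro image_eqI[of _ _ t]) auto
    qed
  qed (auto simp: base_levels_def)
  ultimately show ?thesis using card_image by fastforce
qed

lemma copy_base_level:
  assumes "q \<in> copies n d" "t < h n" "c (n + d) ! (q + t) < P (n + d)"
  shows "c n ! t < P n"
proof -
  have "real (c (n + d) ! (q + t)) * w (n + d) \<in> L (n + d) (q + t)"
    using w_pos[of "n + d"] unfolding L_def by simp
  then have "real (c (n + d) ! (q + t)) * w (n + d) \<in> L n t"
    using L_copy_subset[OF assms(1,2)] by blast
  moreover have "real (c (n + d) ! (q + t)) * w (n + d) \<in> F"
    using L_subset_F[OF assms(3)] w_pos[of "n + d"] unfolding L_def by auto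
  ultimately show ?thesis using L_disjoint_F by blast
qed

text \<open>Spacers added at later stages sit above all levels contained in I.\<close>
lemma base_level_in_copy:
  "p < h (n + d) \<Longrightarrow> c (n + d) ! p < P (n + d) \<Longrightarrow> \<exists>q\<in>copies n d. q \<le> p \<and> p < q + h n"
proof (induction d arbitrary: p)
  case (Suc d)
  let ?K = "n + d"
  have "p < h (Suc ?K)" using Suc.prems(1) by simp
  from index_Suc_cases[OF this] show ?case
  proof (elim disjE exE conjE)
    fix j i assume a: "j < r ?K" "i < h ?K" "p = pos ?K j + i"
    have "c ?K ! i * r ?K + j < P ?K * r ?K"
      using Suc.prems(2) c_Suc_nth_copy[OF a(1,2)] a(3) P_Suc by simp
    then have "c ?K ! i < P ?K" by (metis add_lessD1 mult_less_cancel2)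
    from Suc.IH[OF a(2) this] obtain q where q: "q \<in> copies n d" "q \<le> i" "i < q + h n" by blast
    have "pos ?K j + q \<in> copies n (Suc d)" using q(1) a(1) by auto
    then show ?thesis using q a(3) by (intro bexI[of _ "pos ?K j + q"]) auto
  next
    fix j k assume a: "j < r ?K" "k < s ?K j" "p = pos ?K j + h ?K + k"
    have "P ?K * r ?K \<le> e ?K * r ?K" using P_le_e by (intro mult_right_mono) auto
    moreover have "c (Suc ?K) ! p < P ?K * r ?K" using Suc.prems(2) P_Suc by simp
    moreover have "c (Suc ?K) ! p = e ?K * r ?K + (\<Sum>l<j. s ?K l) + k"
      using c_Suc_nth_spacer[OF a(1,2)] a(3) by simp
    ultimately show ?thesis by linarith
  qed
qed simp

lemma card_base_levels_in_close_copies: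
  assumes "Q \<subseteq> copies n d" "\<And>q q'. q \<in> Q \<Longrightarrow> q' \<in> Q \<Longrightarrow> q \<le> q' \<Longrightarrow> q' < q + h n"
    and "\<And>p. p \<in> A \<Longrightarrow> c (n + d) ! p < P (n + d) \<and> (\<exists>q\<in>Q. q \<le> p \<and> p < q + h n)"
  shows "card A \<le> P n"
proof (cases "A = {}")
  case False
  then obtain q0 where q0: "q0 \<in> Q" using assms(3) by blast
  have "A \<subseteq> (\<lambda>t. q0 + t) ` base_levels n"
  proof
    fix p assume "p \<in> A"
    then obtain q where q: "q \<in> Q" "q \<le> p" "p < q + h n" and cp: "c (n + d) ! p < P (n + d)"
      using assms(3) by blast
    have "q = q0"
      using copies_separated[of q n d q0] copies_separated[of q0 n d q] assms(1,2) q(1) q0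
      by (metis in_mono linorder_neqE_nat not_le order_less_imp_le)
    then have "c n ! (p - q0) < P n"
      using copy_base_level[of q0 n d "p - q0"] q q0 cp assms(1) by auto
    then show "p \<in> (\<lambda>t. q0 + t) ` base_levels n"
      using q \<open>q = q0\<close> unfolding base_levels_def by (intro image_eqI[of _ _ "p - q0"]) auto
  qed
  then have "card A \<le> card ((\<lambda>t. q0 + t) ` base_levels n)"
    by (intro card_mono) (auto simp: finite_base_levels)
  also have "\<dots> \<le> P n" using card_image_le[OF finite_base_levels] card_base_levels by metis
  finally show ?thesis .
qed simp

text \<open>Copies of C_n are at least h n apart, so a window of at most h n consecutive levels of a
  later column meets at most two of them.\<close>
lemma window_base_count:
  assumes "m \<le> h n"
  shows "card {p. i \<le> p \<and> p < i + m \<and> p < h (n + d) \<and> c (n + d) ! p < P (n + d)} \<le> 2 * P n"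
    (is "card ?W \<le> _")
proof -
  define Q1 where "Q1 = {q \<in> copies n d. q \<le> i \<and> i < q + h n}"
  define Q2 where "Q2 = {q \<in> copies n d. i < q \<and> q < i + m}"
  let ?A = "\<lambda>Q. {p \<in> ?W. \<exists>q\<in>Q. q \<le> p \<and> p < q + h n}"
  have "?W \<subseteq> ?A Q1 \<union> ?A Q2"
  proof
    fix p assume p: "p \<in> ?W"
    then obtain q where "q \<in> copies n d" "q \<le> p" "p < q + h n" using base_level_in_copy by blast
    with p show "p \<in> ?A Q1 \<union> ?A Q2" unfolding Q1_def Q2_def by (cases "q \<le> i") force+
  qed
  then have "card ?W \<le> card (?A Q1 \<union> ?A Q2)" by (intro card_mono) auto
  also have "\<dots> \<le> card (?A Q1) + card (?A Q2)" by (rule card_Un_le)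
  also have "card (?A Q1) \<le> P n"
    by (rule card_base_levels_in_close_copies[of Q1 n d]) (auto simp: Q1_def)
  also have "card (?A Q2) \<le> P n"
    by (rule card_base_levels_in_close_copies[of Q2 n d]) (use assms in \<open>auto simp: Q2_def\<close>)
  finally show ?thesis by simp
qed

lemma last_subcolumn_if_near_top:
  assumes "j < r n" "i < h n" "k < h n" "h (Suc n) \<le> pos n j + i + k"
  shows "Suc j = r n"
proof (rule ccontr)
  assume "Suc j \<noteq> r n"
  then have "Suc j < r n" using assms(1) by simp
  have "pos n j + h n + h n \<le> pos n (Suc j) + h n" by (simp add: pos_Suc)
  also have "\<dots> \<le> h (Suc n)" using pos_add_h_le_h_Suc[OF \<open>Suc j < r n\<close>] .
  finally show False using assms(2-4) by simp
qed

lemma right_end_last_subcolumn: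
  assumes "Suc j = r n" "i < h n"
  shows "(real (c (Suc n) ! (pos n j + i)) + 1) * w (Suc n) = (real (c n ! i) + 1) * w n"
proof -
  have "j < r n" "real (r n) = real j + 1" using assms(1) by (simp_all flip: assms(1))
  then have "real (c (Suc n) ! (pos n j + i)) + 1 = (real (c n ! i) + 1) * real (r n)"
    using c_Suc_nth_copy[of j n i] assms(2) by (simp add: algebra_simps)
  then show ?thesis using w_Suc[of n] by (simp add: mult.assoc)
qed

text \<open>If x stayed among the top k levels at every stage, it would always lie in the last
  subcolumn, so the right end of its level would stay fixed while the widths shrink to 0.\<close>
lemma F_far_from_top:
  assumes x: "x \<in> F"
  shows "\<exists>K i. x \<in> L K i \<and> i + k < h K"
proof (rule ccontr)
  assume "\<not> ?thesis"
  then have top: "\<And>K i. x \<in> L K i \<Longrightarrow> h K \<le> i + k" by force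
  obtain i0 where i0: "i0 < h k" "x \<in> L k i0" using F_in_level[OF x] by blast
  define R where "R = (real (c k ! i0) + 1) * w k"
  have right_end: "\<exists>i<h (k + d). x \<in> L (k + d) i \<and> (real (c (k + d) ! i) + 1) * w (k + d) = R" for d
  proof (induction d)
    case (Suc d)
    let ?K = "k + d"
    from Suc obtain i where i: "i < h ?K" "x \<in> L ?K i" "(real (c ?K ! i) + 1) * w ?K = R" by blast
    from L_Suc_cover[OF i(1,2)] obtain j where j: "j < r ?K" "x \<in> L (Suc ?K) (pos ?K j + i)" by blast
    have inh: "pos ?K j + i < h (Suc ?K)" using pos_add_h_le_h_Suc[OF j(1)] i(1) by simp
    have "k < h ?K" using less_h[of ?K] by linarith
    then have "Suc j = r ?K"
      using last_subcolumn_if_near_top[OF j(1) i(1)] top[OF j(2)] by simp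
    then have "(real (c (Suc ?K) ! (pos ?K j + i)) + 1) * w (Suc ?K) = R"
      using right_end_last_subcolumn i by simp
    then show ?case using inh j(2) by (intro exI[of _ "pos ?K j + i"]) simp
  qed (use i0 R_def in auto)
  have "x < R" using i0 unfolding R_def L_def by simp
  then obtain d where d: "w (k + d) < R - x" using w_eventually_less[of "R - x" k] by auto
  from right_end[of d] obtain i where "x \<in> L (k + d) i" "(real (c (k + d) ! i) + 1) * w (k + d) = R"
    by blast
  then show False using d unfolding L_def by (simp add: algebra_simps)
qed

lemma iterate_image_F:
  "(T ^^ k) ` F = (\<Union>K. \<Union>i\<in>{i. i + k < h K \<and> c K ! i < P K}. L K (i + k))"
proof
  show "(T ^^ k) ` F \<subseteq> (\<Union>K. \<Union>i\<in>{i. i + k < h K \<and> c K ! i < P K}. L K (i + k))"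
  proof
    fix y assume "y \<in> (T ^^ k) ` F"
    then obtain x where x: "x \<in> F" "y = (T ^^ k) x" by blast
    from F_far_from_top[OF x(1), of k] obtain K i where Ki: "x \<in> L K i" "i + k < h K" by blast
    have "c K ! i < P K" using L_disjoint_F Ki x by blast
    moreover have "y \<in> L K (i + k)" using T_iterate_in_L[OF Ki] x by simp
    ultimately show "y \<in> (\<Union>K. \<Union>i\<in>{i. i + k < h K \<and> c K ! i < P K}. L K (i + k))"
      using Ki by blast
  qed
next
  show "(\<Union>K. \<Union>i\<in>{i. i + k < h K \<and> c K ! i < P K}. L K (i + k)) \<subseteq> (T ^^ k) ` F"
  proof
    fix y assume "y \<in> (\<Union>K. \<Union>i\<in>{i. i + k < h K \<and> c K ! i < P K}. L K (i + k))"
    then obtain K i where Ki: "i + k < h K" "c K ! i < P K" "y \<in> L K (i + k)" by blast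
    define x where "x = y + (real (c K ! i) - real (c K ! (i + k))) * w K"
    have xL: "x \<in> L K i" unfolding x_def by (rule L_shift[OF Ki(3)])
    have "(T ^^ k) x = y" unfolding T_iterate[OF xL Ki(1)] by (simp add: x_def algebra_simps)
    moreover have "x \<in> F" using L_subset_F[OF Ki(2)] xL by blast
    ultimately show "y \<in> (T ^^ k) ` F" by blast
  qed
qed

lemma space_M_subset_iterates_F: "rk1_space w0 r s \<subseteq> (\<Union>i. (T ^^ i) ` F)"
proof
  fix x assume "x \<in> rk1_space w0 r s"
  then obtain n i where ni: "i < h n" "x \<in> L n i" unfolding rk1_space_eq by blast
  define x0 where "x0 = x + (real (c n ! 0) - real (c n ! i)) * w n"
  have x0L: "x0 \<in> L n 0" unfolding x0_def by (rule L_shift[OF ni(2)])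
  then have "x0 \<in> F" using L_subset_F c_0 P_pos by (metis subsetD)
  moreover have "(T ^^ i) x0 = x" using T_iterate[of x0 n 0 i] x0L ni(1) by (simp add: x0_def algebra_simps)
  ultimately show "x \<in> (\<Union>i. (T ^^ i) ` F)" by blast
qed

abbreviation M where "M \<equiv> rk1_measure w0 r s"

lemma L_borel: "L n i \<in> sets borel"
  unfolding L_def by simp

lemma iterate_image_F_borel: "(T ^^ k) ` F \<in> sets borel"
  unfolding iterate_image_F using L_borel by (intro sets.countable_UN' sets.countable_UN) auto

lemma rk1_space_borel: "rk1_space w0 r s \<in> sets borel"
  unfolding rk1_space_eq using L_borel by (intro sets.countable_UN sets.finite_UN) auto

lemma rk1_space_sets: "rk1_space w0 r s \<inter> space lborel \<in> sets lborel"
  using rk1_space_borel by simp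

lemma space_M: "space M = rk1_space w0 r s"
  unfolding rk1_measure_def space_restrict_space by simp

lemma sets_M: "A \<subseteq> rk1_space w0 r s \<Longrightarrow> A \<in> sets borel \<Longrightarrow> A \<in> sets M"
  unfolding rk1_measure_def using sets_restrict_space_iff[OF rk1_space_sets] by simp

lemma emeasure_M: "A \<subseteq> rk1_space w0 r s \<Longrightarrow> emeasure M A = emeasure lborel A"
  unfolding rk1_measure_def by (rule emeasure_restrict_space[OF rk1_space_sets])

lemma measure_M: "A \<subseteq> rk1_space w0 r s \<Longrightarrow> measure M A = measure lborel A"
  unfolding rk1_measure_def by (rule measure_restrict_space[OF rk1_space_sets])

lemma emeasure_L: "emeasure lborel (L n i) = ennreal (w n)"
  unfolding L_def using w_pos[of n] by (simp add: algebra_simps)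

lemma measure_L: "measure lborel (L n i) = w n"
  unfolding measure_def emeasure_L using w_pos[of n] by simp

lemma F_subset_space: "F \<subseteq> rk1_space w0 r s"
proof
  fix x assume "x \<in> F"
  moreover have "0 < h 0" using h_0 by simp
  ultimately show "x \<in> rk1_space w0 r s" unfolding rk1_space_eq F_def by blast
qed

lemma emeasure_M_F: "emeasure M F = ennreal w0"
  using emeasure_M[OF F_subset_space] emeasure_L[of 0 0] unfolding F_def w_0 by simp

lemma measure_M_F: "measure M F = w0"
  using measure_M[OF F_subset_space] measure_L[of 0 0] unfolding F_def w_0 by simp

section \<open>Lower bound for a_m(I)\<close>

definition base_returns where
  "base_returns N k = {a. a + k < h N \<and> c N ! a < P N \<and> c N ! (a + k) < P N}"

lemma finite_base_returns: "finite (base_returns N k)"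
  unfolding base_returns_def by (rule finite_subset[of _ "{..<h N}"]) auto

lemma measure_return_ge:
  "real (card (base_returns N k)) * w N \<le> measure M (F \<inter> (T ^^ k) ` F)"
proof -
  define U where "U = (\<Union>a\<in>base_returns N k. L N (a + k))"
  have "U \<subseteq> F \<inter> (T ^^ k) ` F"
  proof
    fix y assume "y \<in> U"
    then obtain a where a: "a \<in> base_returns N k" "y \<in> L N (a + k)" unfolding U_def by blast
    then have "y \<in> F" using L_subset_F[of N "a + k"] unfolding base_returns_def by blast
    moreover have "y \<in> (T ^^ k) ` F"
      unfolding iterate_image_F using a unfolding base_returns_def by blast
    ultimately show "y \<in> F \<inter> (T ^^ k) ` F" by blast
  qed
  moreover have "F \<inter> (T ^^ k) ` F \<in> fmeasurable lborel"
  proof (rule fmeasurableI2[of F])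
    show "F \<in> fmeasurable lborel" using emeasure_L[of 0 0] L_borel unfolding F_def by (auto intro: fmeasurableI)
  qed (use iterate_image_F_borel L_borel[of 0 0] in \<open>auto simp: F_def\<close>)
  moreover have "U \<in> sets lborel" unfolding U_def using L_borel finite_base_returns by auto
  ultimately have "measure lborel U \<le> measure lborel (F \<inter> (T ^^ k) ` F)"
    by (intro measure_mono_fmeasurable)
  moreover have "measure lborel U = (\<Sum>a\<in>base_returns N k. measure lborel (L N (a + k)))"
    unfolding U_def
  proof (rule measure_finite_Union[OF finite_base_returns])
    show "(\<lambda>a. L N (a + k)) ` base_returns N k \<subseteq> sets lborel" using L_borel by auto
    show "disjoint_family_on (\<lambda>a. L N (a + k)) (base_returns N k)"
      unfolding disjoint_family_on_def base_returns_def using L_disjoint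
      by (auto simp: disjoint_iff) (metis add_right_cancel)
    show "\<And>a. emeasure lborel (L N (a + k)) \<noteq> \<infinity>" using emeasure_L by simp
  qed
  moreover have "measure M (F \<inter> (T ^^ k) ` F) = measure lborel (F \<inter> (T ^^ k) ` F)"
    using F_subset_space by (intro measure_M) blast
  ultimately show ?thesis by (simp add: measure_L)
qed

text \<open>Every ordered pair (a, b) of base levels of C_N with a \<le> b is counted in base_returns N (b - a).\<close>
lemma P_square_le_sum_base_returns:
  "real (P N) ^ 2 \<le> 2 * (\<Sum>k<h N. real (card (base_returns N k)))"
proof -
  define Sg where "Sg = (SIGMA k:{..<h N}. base_returns N k)"
  define Dg where "Dg = {(a, b). a \<in> base_levels N \<and> b \<in> base_levels N \<and> a \<le> b}"
  have finS: "finite Sg" unfolding Sg_def using finite_base_returns by auto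
  have "Dg \<subseteq> (\<lambda>(k, a). (a, a + k)) ` Sg"
  proof
    fix p assume "p \<in> Dg"
    then obtain a b where ab: "p = (a, b)" "a \<in> base_levels N" "b \<in> base_levels N" "a \<le> b"
      unfolding Dg_def by auto
    then have "(b - a, a) \<in> Sg" unfolding Sg_def base_returns_def base_levels_def by auto
    with ab show "p \<in> (\<lambda>(k, a). (a, a + k)) ` Sg" by force
  qed
  then have "card Dg \<le> card ((\<lambda>(k, a). (a, a + k)) ` Sg)" using finS by (intro card_mono) auto
  also have "\<dots> \<le> card Sg" using finS by (rule card_image_le)
  finally have DS: "card Dg \<le> card Sg" .
  have finD: "finite Dg"
    by (rule finite_subset[of Dg "base_levels N \<times> base_levels N"]) (auto simp: Dg_def finite_base_levels)
  have "base_levels N \<times> base_levels N \<subseteq> Dg \<union> prod.swap ` Dg" unfolding Dg_def by auto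
  then have "card (base_levels N \<times> base_levels N) \<le> card (Dg \<union> prod.swap ` Dg)"
    using finD by (intro card_mono) auto
  also have "\<dots> \<le> card Dg + card (prod.swap ` Dg)" by (rule card_Un_le)
  also have "\<dots> \<le> 2 * card Sg" using card_image_le[OF finD, of prod.swap] DS by simp
  also have "card Sg = (\<Sum>k<h N. card (base_returns N k))"
    unfolding Sg_def using finite_base_returns by simp
  finally have "P N * P N \<le> 2 * (\<Sum>k<h N. card (base_returns N k))"
    by (simp add: card_cartesian_product card_base_levels)
  then have "real (P N * P N) \<le> real (2 * (\<Sum>k<h N. card (base_returns N k)))"
    by (simp only: of_nat_le_iff)
  then show ?thesis by (simp add: power2_eq_square)
qed

lemma ret_a_ge:
  assumes "h N \<le> m"
  shows "real (P N) / (2 * w0) \<le> ret_a M T F m"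
proof -
  have "real (P N) / (2 * w0) = (real (P N) ^ 2 / 2) * (w N / w0 ^ 2)"
    using P_mult_w[of N] w0_pos by (simp add: field_simps power2_eq_square)
  also have "\<dots> \<le> (\<Sum>k<h N. real (card (base_returns N k))) * (w N / w0 ^ 2)"
    using P_square_le_sum_base_returns[of N] w_pos[of N] by (intro mult_right_mono) auto
  also have "\<dots> = (\<Sum>k<h N. real (card (base_returns N k)) * w N / w0 ^ 2)"
    by (simp only: sum_distrib_right times_divide_eq_right sum_divide_distrib)
  also have "\<dots> \<le> (\<Sum>k<h N. ret_u M T F k)"
    unfolding ret_u_def measure_M_F using measure_return_ge w0_pos
    by (intro sum_mono divide_right_mono) auto
  also have "\<dots> \<le> ret_a M T F m"
    unfolding ret_a_def ret_u_def using assms by (intro sum_mono2) auto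
  finally show ?thesis .
qed

section \<open>Upper bound for S_m(1_I)\<close>

lemma birk_S_le:
  assumes "x \<in> L K i" "i + m \<le> h K" "m \<le> h n" "n \<le> K"
  shows "birk_S T m (indicator F) x \<le> 2 * real (P n)"
proof -
  define J where "J = {j. j < m \<and> c K ! (i + j) < P K}"
  have "birk_S T m (indicator F) x = (\<Sum>j<m. indicator J j)"
    unfolding birk_S_def
  proof (rule sum.cong[OF refl])
    fix j assume j: "j \<in> {..<m}"
    then have "i + j < h K" using assms(2) by simp
    from indicator_F_L[OF T_iterate_in_L[OF assms(1) this]] j
    show "indicator F ((T ^^ j) x) = (indicator J j :: real)"
      unfolding J_def by (simp add: indicator_def)
  qed
  also have "\<dots> = real (card J)"
    unfolding indicator_def J_def by (simp add: sum.If_cases Int_def)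
  finally have SJ: "birk_S T m (indicator F) x = real (card J)" .
  obtain d where K: "K = n + d" using assms(4) le_Suc_ex by blast
  have "(\<lambda>j. i + j) ` J \<subseteq> {p. i \<le> p \<and> p < i + m \<and> p < h (n + d) \<and> c (n + d) ! p < P (n + d)}"
    unfolding J_def using assms(2) K by auto
  then have "card ((\<lambda>j. i + j) ` J) \<le> card {p. i \<le> p \<and> p < i + m \<and> p < h (n + d) \<and> c (n + d) ! p < P (n + d)}"
    by (intro card_mono) auto
  also have "\<dots> \<le> 2 * P n" by (rule window_base_count[OF assms(3)])
  finally have "card ((\<lambda>j. i + j) ` J) \<le> 2 * P n" .
  then have "card J \<le> 2 * P n" by (simp add: card_image)
  then show ?thesis unfolding SJ by (metis of_nat_le_iff of_nat_mult of_nat_numeral)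
qed

definition inner_points where "inner_points m = (\<Union>K. \<Union>i\<in>{i. i < h K \<and> i + m \<le> h K}. L K i)"

lemma inner_points_deeper:
  assumes "x \<in> inner_points m"
  shows "\<exists>K\<ge>n. \<exists>i. x \<in> L K i \<and> i + m \<le> h K"
proof -
  obtain K i where Ki: "x \<in> L K i" "i < h K" "i + m \<le> h K"
    using assms unfolding inner_points_def by blast
  obtain q where "q \<in> copies K n" "x \<in> L (K + n) (q + i)" using copies_cover[OF Ki(1,2)] by blast
  moreover have "q + i + m \<le> h (K + n)" using copy_add_h_le[OF \<open>q \<in> _\<close>] Ki(3) by simp
  ultimately show ?thesis by (intro exI[of _ "K + n"]) auto
qed

lemma inner_points_borel: "inner_points m \<in> sets borel"
  unfolding inner_points_def using L_borel by (intro sets.countable_UN sets.countable_UN') auto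

lemma null_if_le_w:
  assumes "B \<in> sets lborel" "\<And>d. emeasure lborel B \<le> ennreal (real m * w (K + d))"
  shows "B \<in> null_sets lborel"
proof -
  have "emeasure lborel B \<noteq> top" using assms(2)[of 0] by (auto simp: top_unique)
  then have eq: "emeasure lborel B = ennreal (measure lborel B)" by (rule emeasure_eq_ennreal_measure)
  have le: "measure lborel B \<le> real m * w (K + d)" for d
    using assms(2)[of d] unfolding eq using w_pos[of "K + d"] by (simp add: ennreal_le_iff)
  have "measure lborel B \<le> 0"
  proof (rule ccontr)
    assume "\<not> measure lborel B \<le> 0"
    then have "0 < measure lborel B / (real m + 1)" by simp
    from w_eventually_less[OF this, of K] obtain d where d: "w (K + d) < measure lborel B / (real m + 1)"
      by blast
    have "real m * w (K + d) \<le> (real m + 1) * w (K + d)" using w_pos[of "K + d"] by simp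
    also have "\<dots> < measure lborel B" using d by (simp add: field_simps)
    finally show False using le[of d] by simp
  qed
  then have "emeasure lborel B = 0" unfolding eq using measure_nonneg[of lborel B] by simp
  then show ?thesis using assms(1) by (simp add: null_sets_def)
qed

lemma emeasure_top_levels_le:
  "emeasure lborel (\<Union>i\<in>{i. i < h K \<and> h K < i + m}. L K i) \<le> ennreal (real m * w K)"
proof -
  define S where "S = {i. i < h K \<and> h K < i + m}"
  have S: "S \<subseteq> {h K - m..<h K}" unfolding S_def by auto
  have finS: "finite S" using S by (rule finite_subset) simp
  have "emeasure lborel (\<Union>i\<in>S. L K i) \<le> (\<Sum>i\<in>S. emeasure lborel (L K i))"
    using finS L_borel by (intro emeasure_subadditive_finite) auto
  also have "\<dots> = ennreal (real (card S) * w K)" unfolding emeasure_L using w_pos[of K]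
    by (simp add: ennreal_of_nat_eq_real_of_nat ennreal_mult)
  also have "\<dots> \<le> ennreal (real m * w K)" using card_mono[OF _ S] w_pos[of K]
    by (intro ennreal_leI mult_right_mono) auto
  finally show ?thesis unfolding S_def .
qed

text \<open>A point in some level of C_K that is not inner lies, at every later stage, in one of the
  top m levels, whose total measure tends to 0.\<close>
lemma AE_inner_points: "AE x in M. x \<in> inner_points m"
proof -
  define Y where "Y K = (\<Union>i<h K. L K i)" for K
  have "Y K - inner_points m \<in> null_sets lborel" for K
  proof (rule null_if_le_w)
    show "Y K - inner_points m \<in> sets lborel" unfolding Y_def using L_borel inner_points_borel by auto
    fix d
    have "Y K - inner_points m \<subseteq> (\<Union>i\<in>{i. i < h (K + d) \<and> h (K + d) < i + m}. L (K + d) i)"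
    proof
      fix x assume x: "x \<in> Y K - inner_points m"
      then obtain i0 where "i0 < h K" "x \<in> L K i0" unfolding Y_def by blast
      from L_deeper[OF this(2,1), of "K + d"] obtain i where i: "i < h (K + d)" "x \<in> L (K + d) i"
        by auto
      have "h (K + d) < i + m"
      proof (rule ccontr)
        assume "\<not> h (K + d) < i + m"
        then have "x \<in> inner_points m" unfolding inner_points_def using i by force
        then show False using x by simp
      qed
      then show "x \<in> (\<Union>i\<in>{i. i < h (K + d) \<and> h (K + d) < i + m}. L (K + d) i)" using i by blast
    qed
    then have "emeasure lborel (Y K - inner_points m)
        \<le> emeasure lborel (\<Union>i\<in>{i. i < h (K + d) \<and> h (K + d) < i + m}. L (K + d) i)"
      using L_borel by (intro emeasure_mono) auto
    also have "\<dots> \<le> ennreal (real m * w (K + d))" by (rule emeasure_top_levels_le)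
    finally show "emeasure lborel (Y K - inner_points m) \<le> ennreal (real m * w (K + d))" .
  qed
  then have "(\<Union>K. Y K - inner_points m) \<in> null_sets lborel" by blast
  moreover have "{x \<in> space lborel. \<not> (x \<in> rk1_space w0 r s \<longrightarrow> x \<in> inner_points m)}
      \<subseteq> (\<Union>K. Y K - inner_points m)"
    unfolding rk1_space_eq Y_def by auto
  ultimately have "AE x in lborel. x \<in> rk1_space w0 r s \<longrightarrow> x \<in> inner_points m" by (rule AE_I')
  then show ?thesis unfolding rk1_measure_def using AE_restrict_space_iff[OF rk1_space_sets] by simp
qed

lemma height_bracket:
  assumes "1 \<le> m"
  obtains N where "h N \<le> m" "m < h (Suc N)"
proof -
  have ex: "\<exists>n. m < h n" using less_h by blast
  define n where "n = (LEAST n. m < h n)"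
  have "m < h n" unfolding n_def by (rule LeastI_ex[OF ex])
  moreover have "n \<noteq> 0" using calculation assms h_0 by (metis not_less)
  moreover have "\<not> m < h (n - 1)" unfolding n_def
    by (metis (mono_tags) calculation(2) diff_less n_def not_less_Least zero_less_one neq0_conv)
  ultimately show ?thesis using that[of "n - 1"] by simp
qed

lemma AE_ratio_bound:
  assumes B: "\<And>n. r n \<le> B" and "1 \<le> m"
  shows "AE x in M. \<bar>birk_S T m (indicator F) x / ret_a M T F m\<bar> \<le> 4 * real B * w0"
proof -
  obtain N where hN: "h N \<le> m" and hSN: "m < h (Suc N)" using height_bracket assms(2) by blast
  let ?a = "ret_a M T F m"
  have a_ge: "real (P N) / (2 * w0) \<le> ?a" by (rule ret_a_ge[OF hN])
  moreover have "0 < real (P N) / (2 * w0)" using P_pos[of N] w0_pos by simp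
  ultimately have a_pos: "0 < ?a" by linarith
  show ?thesis using AE_inner_points[of m]
  proof (rule eventually_mono)
    fix x assume "x \<in> inner_points m"
    then obtain K i where "Suc N \<le> K" "x \<in> L K i" "i + m \<le> h K" using inner_points_deeper by blast
    then have "birk_S T m (indicator F) x \<le> 2 * real (P (Suc N))"
      using birk_S_le hSN by simp
    also have "\<dots> \<le> 2 * real B * real (P N)"
      using mult_right_mono[of "real (r N)" "real B" "real (P N)"] B[of N] unfolding P_Suc by (simp add: mult.commute)
    also have "\<dots> = 4 * real B * w0 * (real (P N) / (2 * w0))" using w0_pos by (simp add: field_simps)
    also have "\<dots> \<le> 4 * real B * w0 * ?a" using a_ge w0_pos by (intro mult_left_mono) auto
    finally have "birk_S T m (indicator F) x / ?a \<le> 4 * real B * w0"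
      using a_pos by (simp add: divide_le_eq)
    moreover have "0 \<le> birk_S T m (indicator F) x" unfolding birk_S_def by (intro sum_nonneg) simp
    ultimately show "\<bar>birk_S T m (indicator F) x / ?a\<bar> \<le> 4 * real B * w0" using a_pos by simp
  qed
qed

end

theorem mainTheorem10:
  fixes w0 :: real and r :: "nat \<Rightarrow> nat" and s :: "nat \<Rightarrow> nat \<Rightarrow> nat"
  assumes "0 < w0"
    and "\<forall>n. 2 \<le> r n"
    and "\<exists>B. \<forall>n. r n \<le> B"
  shows "bre_wrt (rk1_measure w0 r s) (rk1_T w0 r s) (rk1_level w0 r s 0 0)"
proof -
  interpret rank_one_construction w0 r s using assms(1,2) by unfold_locales auto
  obtain B where B: "\<And>n. r n \<le> B" using assms(3) by blast
  show ?thesis unfolding bre_wrt_def rk1_level_0_0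
  proof (intro conjI exI allI impI)
    show "F \<in> sets M" using sets_M[OF F_subset_space] L_borel unfolding F_def by blast
    show "0 < emeasure M F" "emeasure M F < \<infinity>" using emeasure_M_F w0_pos by simp_all
    show "emeasure M (space M - (\<Union>i. (T ^^ i) ` F)) = 0"
      using space_M_subset_iterates_F unfolding space_M by (metis Diff_eq_empty_iff emeasure_empty)
    show "AE x in M. \<bar>birk_S T m (indicator F) x / ret_a M T F m\<bar> \<le> 4 * real B * w0" if "1 \<le> m" for m
      using AE_ratio_bound[OF B that] .
  qed
qed

end
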